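(* Let $\Delta\ge 3$ and $n\ge 3$. For every execution of the traversal procedure on $T_{n,\Delta}$, the number of edges of the output graph $G$ satisfies $$|E(G)| < \Bigl(2-\frac{1}{\Delta-1}\Bigr)n+\frac{\Delta-3}{2}.$$
   Context: Fix integers $\Delta\ge 3$ and $n\ge 3$, and put $b=\Delta-1$. The complete $\Delta$-ary tree $T_{n,\Delta}$ is the rooted tree on vertex set $\{1,\dots,n\}$ with root $1$ in which the children of a vertex $i$ are the integers $j$ with $b(i-1)+2\le j\le bi+1$ and $j\le n$ (equivalently, the parent of $j\ge 2$ is $\lfloor (j-2)/b\rfloor+1$). Thus every vertex has at most $\Delta-1$ children, all levels except possibly the last are full, and the last level is filled from the left. A leaf is a vertex other than the root having no children. Traversal procedure: start with edge set $E$ equal to the edge set of $T_{n,\Delta}$, all vertices unmarked, and $v_1=1$. For $k=1,\dots,n-1$: mark $v_k$; then (a) if $v_k\neq 1$ and the parent of $v_k$ is unmarked, let $v_{k+1}$ be the parent of $v_k$; (b) otherwise, if $v_k$ has an unmarked child, let $v_{k+1}$ be any unmarked child of $v_k$; (c) otherwise, let $v_{k+1}$ be any unmarked leaf $u$ and add the edge $\{v_k,u\}$ to $E$ (a "jump edge"). Finally mark $v_n$ and add the edge $\{v_n,1\}$ to $E$ (if not already present). The output is the simple graph $G=(\{1,\dots,n\},E)$. An execution is any run of this procedure, i.e. any admissible sequence of choices in (b) and (c). *)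

theory Defs
  imports Complex_Main
begin

text \<open>Complete Delta-ary tree on vertices 1..n, root 1, b = Delta - 1.
  Parent of j >= 2 is (j - 2) div b + 1.\<close>

definition tparent :: "nat \<Rightarrow> nat \<Rightarrow> nat" where
  "tparent \<Delta> j = (j - 2) div (\<Delta> - 1) + 1"

definition is_child :: "nat \<Rightarrow> nat \<Rightarrow> nat \<Rightarrow> nat \<Rightarrow> bool" where
  "is_child \<Delta> n i j \<longleftrightarrow> 2 \<le> j \<and> j \<le> n \<and> tparent \<Delta> j = i"

definition is_leaf :: "nat \<Rightarrow> nat \<Rightarrow> nat \<Rightarrow> bool" where
  "is_leaf \<Delta> n u \<longleftrightarrow> 2 \<le> u \<and> u \<le> n \<and> (\<nexists>j. is_child \<Delta> n u j)"

definition tree_edges :: "nat \<Rightarrow> nat \<Rightarrow> nat set set" where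
  "tree_edges \<Delta> n = {{tparent \<Delta> j, j} | j. 2 \<le> j \<and> j \<le> n}"

definition marked :: "(nat \<Rightarrow> nat) \<Rightarrow> nat \<Rightarrow> nat set" where
  "marked v k = v ` {1..k}"

definition case_a :: "nat \<Rightarrow> (nat \<Rightarrow> nat) \<Rightarrow> nat \<Rightarrow> bool" where
  "case_a \<Delta> v k \<longleftrightarrow> v k \<noteq> 1 \<and> tparent \<Delta> (v k) \<notin> marked v k"

definition case_b :: "nat \<Rightarrow> nat \<Rightarrow> (nat \<Rightarrow> nat) \<Rightarrow> nat \<Rightarrow> bool" where
  "case_b \<Delta> n v k \<longleftrightarrow> (\<exists>c. is_child \<Delta> n (v k) c \<and> c \<notin> marked v k)"

definition execution :: "nat \<Rightarrow> nat \<Rightarrow> (nat \<Rightarrow> nat) \<Rightarrow> bool" where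
  "execution \<Delta> n v \<longleftrightarrow> v 1 = 1 \<and>
     (\<forall>k. 1 \<le> k \<and> k \<le> n - 1 \<longrightarrow>
        (if case_a \<Delta> v k then v (Suc k) = tparent \<Delta> (v k)
         else if case_b \<Delta> n v k then is_child \<Delta> n (v k) (v (Suc k)) \<and> v (Suc k) \<notin> marked v k
         else is_leaf \<Delta> n (v (Suc k)) \<and> v (Suc k) \<notin> marked v k))"

definition jump_edges :: "nat \<Rightarrow> nat \<Rightarrow> (nat \<Rightarrow> nat) \<Rightarrow> nat set set" where
  "jump_edges \<Delta> n v = {{v k, v (Suc k)} | k. 1 \<le> k \<and> k \<le> n - 1 \<and>
                          \<not> case_a \<Delta> v k \<and> \<not> case_b \<Delta> n v k}"

definition output_edges :: "nat \<Rightarrow> nat \<Rightarrow> (nat \<Rightarrow> nat) \<Rightarrow> nat set set" where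
  "output_edges \<Delta> n v = tree_edges \<Delta> n \<union> jump_edges \<Delta> n v \<union> {{v n, 1}}"

end

theory Submission
  imports Defs
begin

(* Write b = \<Delta> - 1 and m = (n - 2) div b + 1.  In the complete tree the
   vertices 1..m are internal and m+1..n are the n - m leaves, and b*m \<ge> n - 1.
   The output graph has at most n - 1 tree edges, one closing edge {v n, 1}, and one
   jump edge per jump step (a step in case (c)).  Every jump step moves to a fresh
   leaf, so the jump targets are distinct leaves.  Before the first jump step the walk
   only descends from the root (the parent of the current vertex is always the vertex
   just visited), so the vertices visited so far increase and the first jump starts
   from a leaf, which can therefore not be a jump target.  Hence there are at most
   n - m - 1 jump steps and |E(G)| \<le> 2n - m - 1, which b*m \<ge> n - 1 turns into the
   claimed bound. *)

definition internal_count :: "nat \<Rightarrow> nat \<Rightarrow> nat" where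
  "internal_count \<Delta> n = (n - 2) div (\<Delta> - 1) + 1"

lemma tparent_less:
  assumes "2 \<le> \<Delta>" "2 \<le> j"
  shows "tparent \<Delta> j < j"
proof -
  have "(j - 2) div (\<Delta> - 1) \<le> j - 2" by (rule div_le_dividend)
  thus ?thesis using assms unfolding tparent_def by linarith
qed

lemma is_child_less:
  assumes "2 \<le> \<Delta>" "is_child \<Delta> n i j"
  shows "i < j"
  using assms tparent_less unfolding is_child_def by blast

lemma is_leaf_iff:
  assumes "2 \<le> \<Delta>" "2 \<le> n"
  shows "is_leaf \<Delta> n u \<longleftrightarrow> internal_count \<Delta> n < u \<and> u \<le> n"
proof
  assume leaf: "is_leaf \<Delta> n u"
  show "internal_count \<Delta> n < u \<and> u \<le> n"
  proof (rule ccontr)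
    assume "\<not> ?thesis"
    hence "u - 1 \<le> (n - 2) div (\<Delta> - 1)" "2 \<le> u"
      using leaf unfolding is_leaf_def internal_count_def by auto
    hence "(\<Delta> - 1) * (u - 1) \<le> (\<Delta> - 1) * ((n - 2) div (\<Delta> - 1))" by (intro mult_le_mono2)
    also have "\<dots> \<le> n - 2" by (rule times_div_less_eq_dividend)
    finally have "is_child \<Delta> n u ((\<Delta> - 1) * (u - 1) + 2)"
      unfolding is_child_def tparent_def using assms \<open>2 \<le> u\<close> by auto
    thus False using leaf unfolding is_leaf_def by blast
  qed
next
  assume after: "internal_count \<Delta> n < u \<and> u \<le> n"
  have "\<not> is_child \<Delta> n u j" for j
  proof
    assume "is_child \<Delta> n u j"
    hence "j \<le> n" "(j - 2) div (\<Delta> - 1) + 1 = u" unfolding is_child_def tparent_def by auto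
    moreover have "(j - 2) div (\<Delta> - 1) \<le> (n - 2) div (\<Delta> - 1)"
      using \<open>j \<le> n\<close> by (intro div_le_mono) auto
    ultimately show False using after unfolding internal_count_def by auto
  qed
  moreover have "2 \<le> u" using after unfolding internal_count_def by simp
  ultimately show "is_leaf \<Delta> n u" unfolding is_leaf_def using after by auto
qed

lemma card_leaves:
  assumes "2 \<le> \<Delta>" "2 \<le> n"
  shows "card {u. is_leaf \<Delta> n u} = n - internal_count \<Delta> n"
proof -
  have "{u. is_leaf \<Delta> n u} = {internal_count \<Delta> n<..n}" by (auto simp: is_leaf_iff[OF assms])
  thus ?thesis by simp
qed

text \<open>The two estimates on the number of internal vertices used in the final arithmetic:
  b internal vertices have room for all n - 1 non-root vertices, and the last vertex is a leaf.\<close>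
lemma internal_count_bounds:
  assumes "2 \<le> \<Delta>" "2 \<le> n"
  shows "n - 1 \<le> (\<Delta> - 1) * internal_count \<Delta> n" and "internal_count \<Delta> n \<le> n - 1"
proof -
  have "n - 2 = (\<Delta> - 1) * ((n - 2) div (\<Delta> - 1)) + (n - 2) mod (\<Delta> - 1)" by simp
  moreover have "(n - 2) mod (\<Delta> - 1) < \<Delta> - 1" using assms(1) by simp
  ultimately have "n - 2 < (\<Delta> - 1) * ((n - 2) div (\<Delta> - 1) + 1)" by (simp add: algebra_simps)
  thus "n - 1 \<le> (\<Delta> - 1) * internal_count \<Delta> n" unfolding internal_count_def by linarith
  have "(n - 2) div (\<Delta> - 1) \<le> n - 2" by (rule div_le_dividend)
  thus "internal_count \<Delta> n \<le> n - 1" unfolding internal_count_def using assms by linarith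
qed

lemma card_tree_edges: "card (tree_edges \<Delta> n) \<le> n - 1"
proof -
  have "tree_edges \<Delta> n = (\<lambda>j. {tparent \<Delta> j, j}) ` {2..n}" unfolding tree_edges_def by auto
  hence "card (tree_edges \<Delta> n) \<le> card {2..n}" by (metis card_image_le finite_atLeastAtMost)
  thus ?thesis by simp
qed

lemma stepwise_increasing_mono:
  fixes f :: "nat \<Rightarrow> nat"
  assumes "\<And>i. a \<le> i \<Longrightarrow> i < c \<Longrightarrow> f i < f (Suc i)" and "a \<le> i" "i \<le> j" "j \<le> c"
  shows "f i \<le> f j"
  using \<open>i \<le> j\<close> \<open>j \<le> c\<close>
proof (induction j rule: dec_induct)
  case (step j)
  thus ?case using assms(1)[of j] \<open>a \<le> i\<close> by simp
qed simp

definition jump_steps :: "nat \<Rightarrow> nat \<Rightarrow> (nat \<Rightarrow> nat) \<Rightarrow> nat set" where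
  "jump_steps \<Delta> n v = {k. 1 \<le> k \<and> k \<le> n - 1 \<and> \<not> case_a \<Delta> v k \<and> \<not> case_b \<Delta> n v k}"

text \<open>One fixed execution of the traversal procedure; the tree facts need only \<Delta>, n \<ge> 2.\<close>
locale traversal =
  fixes \<Delta> n :: nat and v :: "nat \<Rightarrow> nat"
  assumes degree: "2 \<le> \<Delta>" and size: "2 \<le> n" and exec: "execution \<Delta> n v"
begin

abbreviation "K \<equiv> jump_steps \<Delta> n v"

lemma start: "v 1 = 1"
  using exec unfolding execution_def by simp

lemma step:
  assumes "1 \<le> k" "k \<le> n - 1"
  shows "if case_a \<Delta> v k then v (Suc k) = tparent \<Delta> (v k)
         else if case_b \<Delta> n v k then is_child \<Delta> n (v k) (v (Suc k)) \<and> v (Suc k) \<notin> marked v k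
         else is_leaf \<Delta> n (v (Suc k)) \<and> v (Suc k) \<notin> marked v k"
  using exec assms unfolding execution_def by blast

text \<open>Every step visits an unmarked vertex (in case (a) by definition of that case).\<close>
lemma fresh:
  assumes "1 \<le> k" "k \<le> n - 1"
  shows "v (Suc k) \<notin> marked v k"
  using step[OF assms] unfolding case_a_def by (auto split: if_splits)

lemma jump_target_leaf: "k \<in> K \<Longrightarrow> is_leaf \<Delta> n (v (Suc k))"
  using step[of k] unfolding jump_steps_def by auto

lemma finite_jump_steps: "finite K"
  unfolding jump_steps_def by auto

text \<open>Distinct steps visit distinct vertices, so a step is determined by its target.\<close>
lemma inj_on_successor: "inj_on (\<lambda>k. v (Suc k)) K"
proof (rule inj_onI)
  fix x y assume "x \<in> K" "y \<in> K" and same: "v (Suc x) = v (Suc y)"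
  have "\<not> x < y" if "x \<in> K" "y \<in> K" "v (Suc x) = v (Suc y)" for x y
  proof
    assume "x < y"
    hence "v (Suc x) \<in> marked v y" unfolding marked_def by auto
    thus False using fresh[of y] that unfolding jump_steps_def by auto
  qed
  thus "x = y" using \<open>x \<in> K\<close> \<open>y \<in> K\<close> same by (metis linorder_neqE_nat)
qed

text \<open>Step 1 descends to vertex 2, so the first jump step is not step 1.\<close>
lemma first_step_not_jump: "1 \<notin> K"
proof -
  have "is_child \<Delta> n 1 2" unfolding is_child_def tparent_def using size by simp
  moreover have "2 \<notin> marked v 1" unfolding marked_def using start by simp
  ultimately have "case_b \<Delta> n v 1" unfolding case_b_def using start by auto
  thus ?thesis unfolding jump_steps_def by simp
qed

text \<open>Until the first jump step the walk descends from the root: the parent of each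
  visited vertex is the previously visited one, so case (a) never applies.\<close>
lemma initial_descent:
  assumes before: "\<And>j. 1 \<le> j \<Longrightarrow> j < k0 \<Longrightarrow> j \<notin> K" and "k0 \<le> n - 1"
  shows "1 \<le> j \<Longrightarrow> j < k0 \<Longrightarrow> is_child \<Delta> n (v j) (v (Suc j))"
proof (induction j)
  case (Suc j)
  have not_a: "\<not> case_a \<Delta> v (Suc j)"
  proof (cases "j = 0")
    case True thus ?thesis using start unfolding case_a_def by simp
  next
    case False
    hence "tparent \<Delta> (v (Suc j)) = v j" using Suc unfolding is_child_def by simp
    moreover have "v j \<in> marked v (Suc j)" unfolding marked_def using False by auto
    ultimately show ?thesis unfolding case_a_def by simp
  qed
  hence "case_b \<Delta> n v (Suc j)"
    using before[of "Suc j"] Suc.prems \<open>k0 \<le> n - 1\<close> unfolding jump_steps_def by auto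
  thus ?case using step[of "Suc j"] not_a Suc.prems \<open>k0 \<le> n - 1\<close> by auto
qed simp

text \<open>The first jump starts from a leaf: having descended along increasing labels, all
  children of the current vertex are still unmarked, so only the absence of children
  can force case (c).\<close>
lemma first_jump_from_leaf:
  assumes "k0 \<in> K" and first: "\<And>k. k \<in> K \<Longrightarrow> k0 \<le> k"
  shows "is_leaf \<Delta> n (v k0)"
proof -
  have "k0 \<noteq> 1" using assms(1) first_step_not_jump by auto
  hence range: "2 \<le> k0" "k0 \<le> n - 1" using assms(1) unfolding jump_steps_def by auto
  have descent: "is_child \<Delta> n (v j) (v (Suc j))" if "1 \<le> j" "j < k0" for j
    using initial_descent[of k0 j] first that range by fastforce
  have increasing: "v i \<le> v k0" if "i \<in> {1..k0}" for i
    using stepwise_increasing_mono[of 1 k0 v i k0] descent is_child_less[OF degree] that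
    by auto
  have no_child: "\<not> is_child \<Delta> n (v k0) c" for c
  proof
    assume child: "is_child \<Delta> n (v k0) c"
    hence "c \<notin> marked v k0"
      using increasing is_child_less[OF degree] unfolding marked_def by fastforce
    hence "case_b \<Delta> n v k0" using child unfolding case_b_def by auto
    thus False using assms(1) unfolding jump_steps_def by simp
  qed
  have "is_child \<Delta> n (v (k0 - 1)) (v k0)" using descent[of "k0 - 1"] range by simp
  thus ?thesis using no_child unfolding is_leaf_def is_child_def by auto
qed

text \<open>The jump targets are distinct leaves other than the leaf of the first jump, so there
  are fewer jump steps than leaves.\<close>
lemma card_jump_steps: "card K \<le> n - internal_count \<Delta> n - 1"
proof (cases "K = {}")
  case False
  define k0 where "k0 = Min K"
  have k0: "k0 \<in> K" "\<And>k. k \<in> K \<Longrightarrow> k0 \<le> k"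
    using False finite_jump_steps unfolding k0_def by auto
  have targets: "(\<lambda>k. v (Suc k)) ` K \<subseteq> {u. is_leaf \<Delta> n u} - {v k0}"
  proof
    fix u assume "u \<in> (\<lambda>k. v (Suc k)) ` K"
    then obtain k where k: "k \<in> K" "u = v (Suc k)" by auto
    have "v k0 \<in> marked v k" using k0(2)[OF k(1)] k0(1) unfolding marked_def jump_steps_def by auto
    hence "u \<noteq> v k0" using fresh[of k] k unfolding jump_steps_def by auto
    thus "u \<in> {u. is_leaf \<Delta> n u} - {v k0}" using jump_target_leaf k by auto
  qed
  have "card K = card ((\<lambda>k. v (Suc k)) ` K)" using card_image[OF inj_on_successor] by simp
  also have "\<dots> \<le> card ({u. is_leaf \<Delta> n u} - {v k0})"
    using targets is_leaf_iff[OF degree size] by (intro card_mono) auto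
  also have "\<dots> = n - internal_count \<Delta> n - 1"
    using first_jump_from_leaf[OF k0] card_leaves[OF degree size] is_leaf_iff[OF degree size]
    by (simp add: card_Diff_singleton_if)
  finally show ?thesis .
qed simp

lemma card_jump_edges: "card (jump_edges \<Delta> n v) \<le> card K"
proof -
  have "jump_edges \<Delta> n v = (\<lambda>k. {v k, v (Suc k)}) ` K"
    unfolding jump_edges_def jump_steps_def by auto
  thus ?thesis using finite_jump_steps by (simp add: card_image_le)
qed

lemma card_output_edges: "card (output_edges \<Delta> n v) \<le> 2 * n - internal_count \<Delta> n - 1"
proof -
  have "card (output_edges \<Delta> n v)
          \<le> card (tree_edges \<Delta> n) + card (jump_edges \<Delta> n v) + card {{v n, 1}}"
    unfolding output_edges_def by (meson card_Un_le add_le_mono le_trans order_refl)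
  also have "\<dots> \<le> (n - 1) + (n - internal_count \<Delta> n - 1) + 1"
    using card_tree_edges[of \<Delta> n] card_jump_edges card_jump_steps by simp
  finally show ?thesis using internal_count_bounds(2)[OF degree size] size by linarith
qed

end

text \<open>The final arithmetic: with b = \<Delta> - 1 and b*m \<ge> n - 1 one has n/b < m + 1.\<close>
lemma edge_budget:
  fixes \<Delta> n m :: nat
  assumes "3 \<le> \<Delta>" "n - 1 \<le> (\<Delta> - 1) * m" "1 \<le> n"
  shows "2 * real n - real m - 1 < (2 - 1 / (real \<Delta> - 1)) * real n + (real \<Delta> - 3) / 2"
proof -
  define b where "b = real \<Delta> - 1"
  have b: "2 \<le> b" unfolding b_def using assms(1) by simp
  have "real (n - 1) \<le> real ((\<Delta> - 1) * m)" using assms(2) by (rule of_nat_mono)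
  moreover have "real (n - 1) = real n - 1" "real (\<Delta> - 1) = b"
    using assms unfolding b_def by (simp_all add: of_nat_diff)
  ultimately have "real n - 1 \<le> b * real m" by simp
  hence "real n / b \<le> real m + 1 / b" using b by (simp add: field_simps)
  moreover have "1 / b < 1" using b by simp
  moreover have "(2 - 1 / (real \<Delta> - 1)) * real n = 2 * real n - real n / b"
    unfolding b_def by (simp add: field_simps)
  moreover have "0 \<le> (real \<Delta> - 3) / 2" using assms(1) by simp
  ultimately show ?thesis by linarith
qed

theorem mainTheorem3:
  fixes \<Delta> n :: nat and v :: "nat \<Rightarrow> nat"
  assumes "\<Delta> \<ge> 3" and "n \<ge> 3" and "execution \<Delta> n v"
  shows "real (card (output_edges \<Delta> n v))
           < (2 - 1 / (real \<Delta> - 1)) * real n + (real \<Delta> - 3) / 2"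
proof -
  interpret traversal \<Delta> n v using assms by unfold_locales auto
  let ?m = "internal_count \<Delta> n"
  have "?m \<le> n - 1" and budget: "n - 1 \<le> (\<Delta> - 1) * ?m"
    using internal_count_bounds degree size by auto
  hence "real (card (output_edges \<Delta> n v)) \<le> 2 * real n - real ?m - 1"
    using card_output_edges size by (simp add: of_nat_diff)
  also have "\<dots> < (2 - 1 / (real \<Delta> - 1)) * real n + (real \<Delta> - 3) / 2"
    using edge_budget[OF assms(1) budget] size by simp
  finally show ?thesis .
qed

end
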